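(* Fix an integer $d\ge7$, an integer $l\ge1$ with $\lambda_l>0$, a constant $\alpha>0$, and constants $\widetilde k\in(0,1)$, $\widetilde\sigma\in(0,\frac12)$. For $s_0>0$ put $\widetilde K=e^{\widetilde k\omega_l s_0}$, where $\omega_l=\lambda_l/\gamma$. For $q=(q_0,\dots,q_{l-1})\in\mathbb R^l$ with $|q|\le e^{-\lambda_l s_0}$, let $\psi_{0,q}$ be any measurable function on $(0,\infty)$ with $$\psi_{0,q}(y)=\begin{cases}U_\alpha(ye^{\omega_l s_0})-\frac{\pi}{2}, & y\in(0,\widetilde K e^{-\omega_l s_0}),\\[2pt] \sum_{n=0}^{l-1}q_n\phi_n(y)-e^{-\lambda_l s_0}\phi_l(y), & y\in[\widetilde K e^{-\omega_l s_0},e^{\widetilde\sigma s_0}),\end{cases}\qquad |\psi_{0,q}(y)|\le\frac{\pi}{2}\ \text{ for } y\ge e^{\widetilde\sigma s_0},$$ and define $\widetilde\phi_l:=e^{\lambda_l s_0}\bigl(\sum_{n=0}^{l-1}q_n\phi_n-\psi_{0,q}\bigr)$. Then there exist $\kappa>0$, $C>0$ and $s_*>0$ (independent of $s_0$, $q$ and of the choice of $\psi_{0,q}$ on $[e^{\widetilde\sigma s_0},\infty)$) such that for all $s_0\ge s_*$, $$\|\widetilde\phi_l-\phi_l\|\le Ce^{-\kappa s_0}\qquad\text{and}\qquad |\langle\widetilde\phi_l,\phi_n\rangle|\le Ce^{-\kappa s_0}\ \text{ for all } n\ne l.$$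
   Context: Let $\omega=\sqrt{d^2-8d+8}$, $\gamma=\frac12(d-2-\omega)$, $\rho(y)=y^{d-1}e^{-y^2/4}$, $\mathcal H=L^2((0,\infty),\rho\,dy)$ with inner product $\langle f,g\rangle=\int_0^\infty fg\rho\,dy$ and norm $\|\cdot\|$. $\lambda_n=-\gamma/2+n$ and $\phi_n(y)=\mathcal N_n y^{-\gamma}L_n^{(\omega/2)}(y^2/4)$ (with $L_n^{(a)}$ the generalized Laguerre polynomial and $\mathcal N_n>0$ chosen so $\|\phi_n\|=1$) are the eigenvalues and orthonormal eigenfunctions of the Friedrichs extension $A$ of $\mathcal A\phi=-\frac1\rho(\rho\phi')'-\frac{d-1}{y^2}\phi$. $U_\alpha$ denotes the solution of $U''+\frac{d-1}{r}U'-\frac{d-1}{2r^2}\sin(2U)=0$ with $U(0)=0$, $U'(0)=\alpha$; one may use (as known) that $U_\alpha(r)=U_1(\alpha r)$, $U_\alpha$ is increasing on $(0,\infty)$, and $U_\alpha(r)=\frac{\pi}{2}-c_\alpha r^{-\gamma}+O(r^{-\gamma-2})$ as $r\to\infty$ for some constant $c_\alpha>0$. *)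

theory Defs
  imports "HOL-Analysis.Analysis" "HOL-Library.Landau_Symbols"
begin

definition omega :: "nat \<Rightarrow> real" where
  "omega d = sqrt (real d ^ 2 - 8 * real d + 8)"

definition gamma :: "nat \<Rightarrow> real" where
  "gamma d = (real d - 2 - omega d) / 2"

definition rho :: "nat \<Rightarrow> real \<Rightarrow> real" where
  "rho d y = y ^ (d - 1) * exp (- (y ^ 2) / 4)"

definition hinner :: "nat \<Rightarrow> (real \<Rightarrow> real) \<Rightarrow> (real \<Rightarrow> real) \<Rightarrow> real" where
  "hinner d f g = (LINT y:{0<..}|lborel. f y * g y * rho d y)"

definition hnorm :: "nat \<Rightarrow> (real \<Rightarrow> real) \<Rightarrow> real" where
  "hnorm d f = sqrt (hinner d f f)"

definition in_H :: "nat \<Rightarrow> (real \<Rightarrow> real) \<Rightarrow> bool" where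
  "in_H d f \<longleftrightarrow> set_borel_measurable lborel {0<..} f \<and>
     (\<integral>\<^sup>+ y. indicator {0<..} y * ennreal ((f y)\<^sup>2 * rho d y) \<partial>lborel) < \<infinity>"

definition genlaguerre :: "nat \<Rightarrow> real \<Rightarrow> real \<Rightarrow> real" where
  "genlaguerre n a x = (\<Sum>k\<le>n. (-1) ^ k * ((real n + a) gchoose (n - k)) * x ^ k / fact k)"

definition lam :: "nat \<Rightarrow> nat \<Rightarrow> real" where
  "lam d n = - gamma d / 2 + real n"

definition phi_raw :: "nat \<Rightarrow> nat \<Rightarrow> real \<Rightarrow> real" where
  "phi_raw d n y = y powr (- gamma d) * genlaguerre n (omega d / 2) (y ^ 2 / 4)"

definition normconst :: "nat \<Rightarrow> nat \<Rightarrow> real" where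
  "normconst d n = 1 / hnorm d (phi_raw d n)"

definition phi :: "nat \<Rightarrow> nat \<Rightarrow> real \<Rightarrow> real" where
  "phi d n y = normconst d n * phi_raw d n y"

definition solves_U :: "nat \<Rightarrow> real \<Rightarrow> (real \<Rightarrow> real) \<Rightarrow> bool" where
  "solves_U d \<alpha> U \<longleftrightarrow>
     U 0 = 0 \<and> (U has_real_derivative \<alpha>) (at 0 within {0..}) \<and>
     (\<forall>r>0. (U has_real_derivative deriv U r) (at r) \<and>
            (deriv U has_real_derivative deriv (deriv U) r) (at r) \<and>
            deriv (deriv U) r + (real d - 1) / r * deriv U r
              - (real d - 1) / (2 * r ^ 2) * sin (2 * U r) = 0)"

end

theory Submission
  imports Defs "HOL-Real_Asymp.Real_Asymp"
begin

text \<open>Put \<open>e = \<phi>t - \<phi>\<^sub>l\<close>, \<open>\<delta> = K exp(-\<omega>\<^sub>l s0)\<close> and \<open>R = exp(\<sigma>t s0)\<close>. On \<open>[\<delta>, R)\<close> the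
  datum is exactly \<open>\<Sum> q\<^sub>n \<phi>\<^sub>n - exp(-\<lambda>\<^sub>l s0) \<phi>\<^sub>l\<close>, so \<open>e\<close> vanishes there. On \<open>(0, \<delta>)\<close> the
  bound \<open>|U(r) - \<pi>/2| \<le> C r^(-\<gamma>)\<close> makes \<open>e\<close> of size \<open>y^(-\<gamma>)\<close>, and
  \<open>y^(-2\<gamma>) \<rho>(y) = y^(1+\<omega>) exp(-y\<^sup>2/4) \<le> 1\<close>, so this region contributes \<open>O(\<delta>)\<close> to
  \<open>\<parallel>e\<parallel>\<^sup>2\<close>. Beyond \<open>R\<close> one only has \<open>|e| = O(exp(\<lambda>\<^sub>l s0) y^(2l))\<close>, but the Gaussian weight
  makes that contribution \<open>O(exp(2\<lambda>\<^sub>l s0 - R\<^sup>2/8))\<close>, which is eventually below \<open>\<delta>\<close>. Hence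
  \<open>\<parallel>e\<parallel> = O(exp(-\<kappa> s0))\<close> with \<open>\<kappa> = (1 - kt) \<omega>\<^sub>l / 2\<close>, and for \<open>n \<noteq> l\<close> orthogonality of
  the \<open>\<phi>\<^sub>n\<close> gives \<open>\<langle>\<phi>t, \<phi>\<^sub>n\<rangle> = \<langle>e, \<phi>\<^sub>n\<rangle>\<close>. That orthogonality is computed from the
  Gaussian moments \<open>\<integral>\<^sub>0\<^sup>\<infinity> y^p exp(-c y\<^sup>2) dy = \<Gamma>((p+1)/2) / (2 c^((p+1)/2))\<close>, which
  reduce it to the vanishing of alternating binomial sums of Pochhammer symbols.\<close>

definition gaussian_moment :: "real \<Rightarrow> real \<Rightarrow> real" where
  "gaussian_moment c p = Gamma ((p + 1) / 2) / (2 * c powr ((p + 1) / 2))"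

lemma nn_integral_atLeast_0_SUP:
  fixes h :: "real \<Rightarrow> real" and r :: "nat \<Rightarrow> real"
  assumes h[measurable]: "h \<in> borel_measurable borel"
    and inc: "incseq r" and lim: "filterlim r at_top sequentially"
  shows "(\<integral>\<^sup>+x. ennreal (h x * indicator {0..} x) \<partial>lborel) =
         (SUP n. \<integral>\<^sup>+x. ennreal (h x * indicator {0..r n} x) \<partial>lborel)"
proof -
  have mono: "incseq (\<lambda>n x. ennreal (h x * indicator {0..r n} x))"
    unfolding incseq_def le_fun_def
  proof (intro allI impI)
    fix m n :: nat and x assume "m \<le> n"
    then have "r m \<le> r n" using inc by (simp add: incseq_def)
    then show "ennreal (h x * indicator {0..r m} x) \<le> ennreal (h x * indicator {0..r n} x)"
      by (cases "h x \<ge> 0") (auto simp: indicator_def intro!: ennreal_leI)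
  qed
  have "(SUP n. ennreal (h x * indicator {0..r n} x)) = ennreal (h x * indicator {0..} x)" for x
  proof (cases "x \<ge> 0")
    case True
    obtain N where N: "r N \<ge> x"
      using lim by (auto simp: filterlim_at_top eventually_sequentially)
    show ?thesis
    proof (rule antisym)
      show "(SUP n. ennreal (h x * indicator {0..r n} x)) \<le> ennreal (h x * indicator {0..} x)"
        using True by (intro SUP_least) (cases "h x \<ge> 0", auto simp: indicator_def intro!: ennreal_leI)
      have "ennreal (h x * indicator {0..} x) = ennreal (h x * indicator {0..r N} x)"
        using True N by (simp add: indicator_def)
      also have "\<dots> \<le> (SUP n. ennreal (h x * indicator {0..r n} x))" by (rule SUP_upper) auto
      finally show "ennreal (h x * indicator {0..} x) \<le> (SUP n. ennreal (h x * indicator {0..r n} x))" .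
    qed
  qed (simp add: indicator_def)
  moreover have "(\<integral>\<^sup>+x. (SUP n. ennreal (h x * indicator {0..r n} x)) \<partial>lborel) =
      (SUP n. \<integral>\<^sup>+x. ennreal (h x * indicator {0..r n} x) \<partial>lborel)"
    by (rule nn_integral_monotone_convergence_SUP[OF mono]) measurable
  ultimately show ?thesis by simp
qed

lemma nn_integral_substitution_square:
  fixes f :: "real \<Rightarrow> real"
  assumes c: "c > 0" and f[measurable]: "f \<in> borel_measurable borel"
  shows "(\<integral>\<^sup>+y. ennreal (f (c * y\<^sup>2) * (2 * c * y) * indicator {0..} y) \<partial>lborel) =
         (\<integral>\<^sup>+x. ennreal (f x * indicator {0..} x) \<partial>lborel)"
proof -
  have bounded_range: "(\<integral>\<^sup>+x. ennreal (f x * indicator {0..c * (real n)\<^sup>2} x) \<partial>lborel) =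
      (\<integral>\<^sup>+y. ennreal (f (c * y\<^sup>2) * (2 * c * y) * indicator {0..real n} y) \<partial>lborel)" for n :: nat
  proof -
    have "(\<integral>\<^sup>+x. f x * indicator {(\<lambda>y. c * y\<^sup>2) 0..(\<lambda>y. c * y\<^sup>2) (real n)} x \<partial>lborel) =
      (\<integral>\<^sup>+y. f ((\<lambda>y. c * y\<^sup>2) y) * (2 * c * y) * indicator {0..real n} y \<partial>lborel)"
      using c by (intro nn_integral_substitution)
        (auto simp: set_borel_measurable_def intro!: derivative_eq_intros continuous_intros)
    then show ?thesis by simp
  qed
  have "incseq (\<lambda>n::nat. c * (real n)\<^sup>2)"
    using c by (auto simp: incseq_def intro!: mult_left_mono power_mono)
  moreover have "filterlim (\<lambda>n::nat. c * (real n)\<^sup>2) at_top sequentially"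
    using c by real_asymp
  moreover have "filterlim (\<lambda>n::nat. real n) at_top sequentially"
    by real_asymp
  ultimately show ?thesis
    using nn_integral_atLeast_0_SUP[of "\<lambda>y. f (c * y\<^sup>2) * (2 * c * y)" real]
      nn_integral_atLeast_0_SUP[of f "\<lambda>n. c * (real n)\<^sup>2"]
    by (simp add: bounded_range incseq_def)
qed

lemma nn_integral_powr_exp_square:
  assumes c: "c > 0" and p: "p > -1"
  shows "(\<integral>\<^sup>+y. ennreal (y powr p * exp (- c * y\<^sup>2) * indicator {0..} y) \<partial>lborel) =
         ennreal (gaussian_moment c p)"
proof -
  define s where "s = (p + 1) / 2"
  have s: "s > 0" using p by (simp add: s_def)
  define f where "f x = (x / c) powr ((p - 1) / 2) * exp (- x) / (2 * c)" for x
  have [measurable]: "f \<in> borel_measurable borel" unfolding f_def by measurable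
  have subst: "f (c * y\<^sup>2) * (2 * c * y) * indicator {0..} y = y powr p * exp (- c * y\<^sup>2) * indicator {0..} y" for y
  proof (cases "y > 0")
    case True
    have "(c * y\<^sup>2 / c) powr ((p - 1) / 2) = (y powr 2) powr ((p - 1) / 2)" using c True by simp
    also have "\<dots> = y powr (2 * ((p - 1) / 2))" by (rule powr_powr)
    also have "2 * ((p - 1) / 2) = p - 1" by simp
    finally have "(c * y\<^sup>2 / c) powr ((p - 1) / 2) * y = y powr p"
      using True by (simp add: powr_diff)
    then show ?thesis using c True unfolding f_def by (simp add: field_simps)
  qed (cases "y = 0", auto simp: f_def indicator_def)
  have gamma_form: "f x * indicator {0..} x =
      1 / (2 * c * c powr (s - 1)) * (indicator {0..} x * x powr (s - 1) / exp x)" for x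
  proof (cases "x \<ge> 0")
    case True
    have "(x / c) powr ((p - 1) / 2) = x powr (s - 1) / c powr (s - 1)"
      using True c by (simp add: powr_divide s_def diff_divide_distrib)
    then show ?thesis using True c by (simp add: f_def indicator_def exp_minus field_simps)
  qed (simp add: indicator_def)
  have "(\<integral>\<^sup>+y. ennreal (y powr p * exp (- c * y\<^sup>2) * indicator {0..} y) \<partial>lborel)
      = (\<integral>\<^sup>+x. ennreal (f x * indicator {0..} x) \<partial>lborel)"
    using nn_integral_substitution_square[OF c, of f] by (simp add: subst)
  also have "\<dots> = (\<integral>\<^sup>+x. ennreal (1 / (2 * c * c powr (s - 1))) *
      ennreal (indicator {0..} x * x powr (s - 1) / exp x) \<partial>lborel)"
    using c unfolding gamma_form by (intro nn_integral_cong ennreal_mult) (auto simp: indicator_def)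
  also have "\<dots> = ennreal (1 / (2 * c * c powr (s - 1))) * ennreal (Gamma s)"
    by (subst nn_integral_cmult) (simp_all add: Gamma_conv_nn_integral_real[OF s])
  also have "\<dots> = ennreal (Gamma s / (2 * c powr s))"
    using c s Gamma_real_pos[OF s] by (simp add: ennreal_mult'[symmetric] powr_diff field_simps)
  finally show ?thesis by (simp add: gaussian_moment_def s_def)
qed
lemma has_bochner_integral_powr_exp_square:
  assumes c: "c > 0" and p: "p > -1"
  shows "has_bochner_integral lborel (\<lambda>y. indicator {0<..} y * (y powr p * exp (- c * y\<^sup>2)))
           (gaussian_moment c p)"
proof (rule has_bochner_integral_nn_integral)
  have "(\<integral>\<^sup>+y. ennreal (indicator {0<..} y * (y powr p * exp (- c * y\<^sup>2))) \<partial>lborel) =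
        (\<integral>\<^sup>+y. ennreal (y powr p * exp (- c * y\<^sup>2) * indicator {0..} y) \<partial>lborel)"
    by (rule nn_integral_cong) (auto simp: indicator_def)
  then show "(\<integral>\<^sup>+y. ennreal (indicator {0<..} y * (y powr p * exp (- c * y\<^sup>2))) \<partial>lborel) =
        ennreal (gaussian_moment c p)"
    using nn_integral_powr_exp_square[OF c p] by simp
qed (use c p in \<open>auto simp: gaussian_moment_def intro!: divide_nonneg_pos\<close>)

lemma alternating_binomial_sum_Suc:
  fixes f :: "nat \<Rightarrow> real"
  shows "(\<Sum>k\<le>Suc n. (-1)^k * real (Suc n choose k) * f k) =
         (\<Sum>k\<le>n. (-1)^k * real (n choose k) * (f k - f (Suc k)))"
proof -
  have shift: "(\<Sum>k\<le>Suc n. (-1)^k * real (Suc n choose k) * f k) =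
      f 0 + (\<Sum>k\<le>n. (-1)^(Suc k) * real (Suc n choose Suc k) * f (Suc k))"
    by (subst sum.atMost_Suc_shift) simp
  have pascal: "(\<Sum>k\<le>n. (-1)^(Suc k) * real (Suc n choose Suc k) * f (Suc k)) =
      (\<Sum>k\<le>n. (-1)^(Suc k) * real (n choose Suc k) * f (Suc k)) -
      (\<Sum>k\<le>n. (-1)^k * real (n choose k) * f (Suc k))"
    by (subst sum_subtractf[symmetric]) (rule sum.cong, simp_all add: algebra_simps)
  have unshift: "f 0 + (\<Sum>k\<le>n. (-1)^(Suc k) * real (n choose Suc k) * f (Suc k)) =
      (\<Sum>k\<le>Suc n. (-1)^k * real (n choose k) * f k)"
    by (subst sum.atMost_Suc_shift) simp
  show ?thesis
    using shift pascal unshift by (simp add: sum_subtractf right_diff_distrib)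
qed

lemma alternating_binomial_sum_pochhammer:
  "j < n \<Longrightarrow> (\<Sum>k\<le>n. (-1)^k * real (n choose k) * pochhammer (b + real k) j) = 0"
proof (induction n arbitrary: j b)
  case 0
  then show ?case by simp
next
  case (Suc n)
  show ?case
  proof (cases j)
    case 0
    then show ?thesis by (subst alternating_binomial_sum_Suc) simp
  next
    case (Suc i)
    have difference: "pochhammer (b + real k) (Suc i) - pochhammer (b + real (Suc k)) (Suc i) =
        - (real i + 1) * pochhammer ((b + 1) + real k) i" for k
    proof -
      have "pochhammer (b + real k) (Suc i) = (b + real k) * pochhammer ((b + 1) + real k) i"
        by (simp add: pochhammer_rec add_ac)
      moreover have "pochhammer (b + real (Suc k)) (Suc i) =
          pochhammer ((b + 1) + real k) i * ((b + 1) + real k + real i)"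
        by (simp add: pochhammer_Suc add_ac)
      ultimately show ?thesis by (simp add: algebra_simps)
    qed
    have "(\<Sum>k\<le>Suc n. (-1)^k * real (Suc n choose k) * pochhammer (b + real k) j)
        = - (real i + 1) * (\<Sum>k\<le>n. (-1)^k * real (n choose k) * pochhammer ((b + 1) + real k) i)"
      unfolding Suc alternating_binomial_sum_Suc difference
      by (simp add: sum_distrib_left algebra_simps)
    also have "\<dots> = 0" using Suc.IH[of i] Suc.prems \<open>j = Suc i\<close> by simp
    finally show ?thesis .
  qed
qed

definition laguerre_coeff :: "nat \<Rightarrow> real \<Rightarrow> nat \<Rightarrow> real" where
  "laguerre_coeff n a k = (-1)^k * ((real n + a) gchoose (n - k)) / fact k"

lemma genlaguerre_eq_sum_coeff: "genlaguerre n a x = (\<Sum>k\<le>n. laguerre_coeff n a k * x^k)"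
  unfolding genlaguerre_def laguerre_coeff_def by (rule sum.cong) auto

lemma laguerre_coeff_Gamma:
  assumes a: "a > -1" and k: "k \<le> n"
  shows "laguerre_coeff n a k * Gamma (a + 1 + real k + real j) =
         Gamma (real n + a + 1) / fact n * ((-1)^k * real (n choose k) * pochhammer (a + 1 + real k) j)"
proof -
  have not_pole: "z > 0 \<Longrightarrow> z \<notin> \<int>\<^sub>\<le>\<^sub>0" for z :: real
    using nonpos_Ints_nonpos[of z] by auto
  have "((real n + a) gchoose (n - k)) =
      Gamma (real n + a + 1) / (fact (n - k) * Gamma (real n + a - real (n - k) + 1))"
    using a by (intro gbinomial_Gamma not_pole) auto
  also have "real n + a - real (n - k) + 1 = a + 1 + real k" using k by (simp add: of_nat_diff)
  finally have binom: "((real n + a) gchoose (n - k)) = Gamma (real n + a + 1) / (fact (n - k) * Gamma (a + 1 + real k))" .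
  have poch: "pochhammer (a + 1 + real k) j = Gamma (a + 1 + real k + real j) / Gamma (a + 1 + real k)"
    using a by (intro pochhammer_Gamma not_pole) auto
  have "Gamma (a + 1 + real k) > 0" using a by (intro Gamma_real_pos) auto
  then show ?thesis
    unfolding laguerre_coeff_def binom poch binomial_fact[OF k] by (simp add: field_simps)
qed

text \<open>Laguerre orthogonality in coefficient form: the sum is
  \<open>\<integral>\<^sub>0\<^sup>\<infinity> x^(a+j) exp(-x) L\<^sub>n\<^sup>(\<^sup>a\<^sup>)(x) dx\<close>.\<close>
lemma laguerre_coeff_Gamma_orthogonal:
  assumes a: "a > -1" and j: "j < n"
  shows "(\<Sum>k\<le>n. laguerre_coeff n a k * Gamma (a + 1 + real k + real j)) = 0"
proof -
  have "(\<Sum>k\<le>n. laguerre_coeff n a k * Gamma (a + 1 + real k + real j)) =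
      Gamma (real n + a + 1) / fact n * (\<Sum>k\<le>n. (-1)^k * real (n choose k) * pochhammer ((a + 1) + real k) j)"
    by (simp add: laguerre_coeff_Gamma[OF a] sum_distrib_left)
  also have "\<dots> = 0" using alternating_binomial_sum_pochhammer[OF j] by simp
  finally show ?thesis .
qed

lemma omega_ge_1: "d \<ge> 7 \<Longrightarrow> omega d \<ge> 1"
proof -
  assume "d \<ge> 7"
  then have "(real d - 1) * (real d - 7) \<ge> 0" by (intro mult_nonneg_nonneg) auto
  then have "real d ^ 2 - 8 * real d + 8 \<ge> 1" by (simp add: algebra_simps power2_eq_square)
  then show ?thesis unfolding omega_def by (simp add: real_le_rsqrt)
qed

lemma gamma_gt_1: "d \<ge> 7 \<Longrightarrow> gamma d > 1"
proof -
  assume "d \<ge> 7"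
  have "sqrt (real d ^ 2 - 8 * real d + 8) < sqrt ((real d - 4)^2)"
    by (intro real_sqrt_less_mono) (simp add: algebra_simps power2_eq_square)
  also have "\<dots> = real d - 4" using \<open>d \<ge> 7\<close> by simp
  finally show ?thesis unfolding gamma_def omega_def by simp
qed

lemma rho_nonneg: "y \<ge> 0 \<Longrightarrow> rho d y \<ge> 0"
  unfolding rho_def by simp

lemma powr_gamma_sq_rho:
  assumes "d \<ge> 7" and y: "y > 0"
  shows "(y powr (- gamma d))\<^sup>2 * rho d y = y powr (1 + omega d) * exp (- (y\<^sup>2) / 4)"
proof -
  have "y ^ (d - 1) = y powr real (d - 1)" using y by (simp add: powr_realpow)
  then have "(y powr (- gamma d))\<^sup>2 * y ^ (d - 1) = y powr (real (d - 1) - 2 * gamma d)"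
    by (simp add: power2_eq_square powr_add[symmetric])
  also have "real (d - 1) - 2 * gamma d = 1 + omega d"
    using \<open>d \<ge> 7\<close> unfolding gamma_def by (simp add: of_nat_diff field_simps)
  finally show ?thesis unfolding rho_def by (simp add: mult.assoc)
qed

lemma has_bochner_integral_laguerre_monomial:
  assumes a: "a > -1"
  shows "has_bochner_integral lborel
           (\<lambda>y. indicator {0<..} y * (y powr (1 + 2 * a) * (y\<^sup>2 / 4) ^ i * exp (- (y\<^sup>2) / 4)))
           (2 * 4 powr a * Gamma (a + 1 + real i))"
proof -
  define p where "p = 1 + 2 * a + 2 * real i"
  have "has_bochner_integral lborel
      (\<lambda>y. (1 / 4 ^ i) * (indicator {0<..} y * (y powr p * exp (- (1 / 4) * y\<^sup>2))))
      ((1 / 4 ^ i) * gaussian_moment (1 / 4) p)"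
    using a by (intro has_bochner_integral_mult_right has_bochner_integral_powr_exp_square)
      (simp_all add: p_def)
  moreover have "(1 / 4 ^ i) * (indicator {0<..} y * (y powr p * exp (- (1 / 4) * y\<^sup>2))) =
      indicator {0<..} y * (y powr (1 + 2 * a) * (y\<^sup>2 / 4) ^ i * exp (- (y\<^sup>2) / 4))" for y
  proof (cases "y > 0")
    case True
    have "(y\<^sup>2) ^ i = y ^ (2 * i)" by (simp add: power_mult)
    also have "\<dots> = y powr real (2 * i)" using True by (rule powr_realpow[symmetric])
    finally have "y powr p = y powr (1 + 2 * a) * (y\<^sup>2) ^ i"
      by (simp add: p_def powr_add)
    then show ?thesis using True by (simp add: power_divide field_simps)
  qed (simp add: indicator_def)
  moreover have "(1 / 4 ^ i) * gaussian_moment (1 / 4) p = 2 * 4 powr a * Gamma (a + 1 + real i)"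
  proof -
    have exponent: "(p + 1) / 2 = a + 1 + real i" by (simp add: p_def field_simps)
    have "(4::real) powr (a + 1 + real i) = 4 powr a * 4 powr real (Suc i)"
      by (simp add: powr_add[symmetric] add_ac)
    also have "(4::real) powr real (Suc i) = 4 * 4 ^ i" using powr_realpow[of 4 "Suc i"] by simp
    finally have "(1 / 4 :: real) powr (a + 1 + real i) = 1 / (4 powr a * (4 * 4 ^ i))"
      by (simp add: powr_divide)
    then show ?thesis unfolding gaussian_moment_def exponent by simp
  qed
  ultimately show ?thesis by simp
qed

definition phi_raw_gram :: "nat \<Rightarrow> nat \<Rightarrow> nat \<Rightarrow> real" where
  "phi_raw_gram d n m = (\<Sum>k\<le>n. \<Sum>j\<le>m.
     laguerre_coeff n (omega d / 2) k * laguerre_coeff m (omega d / 2) j *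
       (2 * 4 powr (omega d / 2) * Gamma (omega d / 2 + 1 + real (k + j))))"

lemma phi_raw_product_rho:
  assumes d: "d \<ge> 7" and y: "y > 0"
  shows "phi_raw d n y * phi_raw d m y * rho d y =
    (\<Sum>k\<le>n. \<Sum>j\<le>m. laguerre_coeff n (omega d / 2) k * laguerre_coeff m (omega d / 2) j *
       (y powr (1 + omega d) * (y\<^sup>2 / 4) ^ (k + j) * exp (- (y\<^sup>2) / 4)))"
proof -
  define a where "a = omega d / 2"
  have "phi_raw d n y * phi_raw d m y * rho d y =
      (y powr (- gamma d))\<^sup>2 * rho d y *
      ((\<Sum>k\<le>n. laguerre_coeff n a k * (y\<^sup>2 / 4) ^ k) * (\<Sum>j\<le>m. laguerre_coeff m a j * (y\<^sup>2 / 4) ^ j))"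
    unfolding phi_raw_def genlaguerre_eq_sum_coeff a_def by (simp add: power2_eq_square algebra_simps)
  also have "\<dots> = (\<Sum>k\<le>n. \<Sum>j\<le>m. y powr (1 + omega d) * exp (- (y\<^sup>2) / 4) *
      (laguerre_coeff n a k * (y\<^sup>2 / 4) ^ k * (laguerre_coeff m a j * (y\<^sup>2 / 4) ^ j)))"
    unfolding powr_gamma_sq_rho[OF d y] sum_product by (simp add: sum_distrib_left)
  finally show ?thesis
    unfolding a_def by (simp add: power_add mult_ac)
qed

lemma has_bochner_integral_phi_raw_product:
  assumes d: "d \<ge> 7"
  shows "has_bochner_integral lborel
           (\<lambda>y. indicator {0<..} y * (phi_raw d n y * phi_raw d m y * rho d y)) (phi_raw_gram d n m)"
proof -
  have "omega d / 2 > -1" using omega_ge_1[OF d] by simp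
  then have "has_bochner_integral lborel (\<lambda>y. \<Sum>k\<le>n. \<Sum>j\<le>m.
      laguerre_coeff n (omega d / 2) k * laguerre_coeff m (omega d / 2) j *
      (indicator {0<..} y * (y powr (1 + 2 * (omega d / 2)) * (y\<^sup>2 / 4) ^ (k + j) * exp (- (y\<^sup>2) / 4))))
      (phi_raw_gram d n m)"
    unfolding phi_raw_gram_def
    by (intro has_bochner_integral_sum has_bochner_integral_mult_right
        has_bochner_integral_laguerre_monomial)
  moreover have "indicator {0<..} y * (phi_raw d n y * phi_raw d m y * rho d y) =
      (\<Sum>k\<le>n. \<Sum>j\<le>m. laguerre_coeff n (omega d / 2) k * laguerre_coeff m (omega d / 2) j *
      (indicator {0<..} y * (y powr (1 + 2 * (omega d / 2)) * (y\<^sup>2 / 4) ^ (k + j) * exp (- (y\<^sup>2) / 4))))" for y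
    by (cases "y > 0") (simp_all add: phi_raw_product_rho[OF d] indicator_def)
  ultimately show ?thesis by simp
qed

lemma phi_raw_gram_eq_0:
  assumes d: "d \<ge> 7" and "n \<noteq> m"
  shows "phi_raw_gram d n m = 0"
proof -
  define a where "a = omega d / 2"
  have a: "a > -1" using omega_ge_1[OF d] by (simp add: a_def)
  define c where "c = 2 * 4 powr a"
  have gram: "phi_raw_gram d n m =
      (\<Sum>k\<le>n. \<Sum>j\<le>m. laguerre_coeff n a k * laguerre_coeff m a j * (c * Gamma (a + 1 + real k + real j)))"
    unfolding phi_raw_gram_def a_def c_def by (simp add: add_ac)
  show ?thesis
  proof (cases "m < n")
    case True
    have "phi_raw_gram d n m =
        (\<Sum>j\<le>m. laguerre_coeff m a j * c * (\<Sum>k\<le>n. laguerre_coeff n a k * Gamma (a + 1 + real k + real j)))"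
      unfolding gram by (subst sum.swap) (simp add: sum_distrib_left algebra_simps)
    with True show ?thesis by (simp add: laguerre_coeff_Gamma_orthogonal[OF a])
  next
    case False
    with \<open>n \<noteq> m\<close> have "n < m" by simp
    have "phi_raw_gram d n m =
        (\<Sum>k\<le>n. laguerre_coeff n a k * c * (\<Sum>j\<le>m. laguerre_coeff m a j * Gamma (a + 1 + real j + real k)))"
      unfolding gram by (simp add: sum_distrib_left algebra_simps)
    with \<open>n < m\<close> show ?thesis by (simp add: laguerre_coeff_Gamma_orthogonal[OF a])
  qed
qed

lemma hinner_eq_integral:
  "hinner d f g = integral\<^sup>L lborel (\<lambda>y. indicator {0<..} y * (f y * g y * rho d y))"
  unfolding hinner_def set_lebesgue_integral_def by simp

lemma in_H_iff_integrable:
  "in_H d f \<longleftrightarrow> set_borel_measurable lborel {0<..} f \<and>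
     integrable lborel (\<lambda>y. indicator {0<..} y * (f y * f y * rho d y))"
proof -
  have "(\<integral>\<^sup>+y. ennreal (norm (indicator {0<..} y * (f y * f y * rho d y))) \<partial>lborel) =
      (\<integral>\<^sup>+y. indicator {0<..} y * ennreal ((f y)\<^sup>2 * rho d y) \<partial>lborel)"
    by (intro nn_integral_cong)
      (auto simp: indicator_def power2_eq_square abs_of_nonneg rho_nonneg)
  moreover have "(\<lambda>y. indicator {0<..} y * (f y * f y * rho d y)) \<in> borel_measurable lborel"
    if "set_borel_measurable lborel {0<..} f"
  proof -
    define F where "F y = indicator {0<..} y * f y" for y
    have [measurable]: "F \<in> borel_measurable lborel"
      using that unfolding set_borel_measurable_def F_def by simp
    have "(\<lambda>y. indicator {0<..} y * (f y * f y * rho d y)) = (\<lambda>y. F y * F y * rho d y)"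
      by (auto simp: fun_eq_iff indicator_def F_def)
    also have "\<dots> \<in> borel_measurable lborel" unfolding rho_def by measurable
    finally show ?thesis .
  qed
  ultimately show ?thesis
    unfolding in_H_def integrable_iff_bounded by auto
qed

lemma abs_mult_le_weighted_squares:
  fixes u v r t :: real
  assumes t: "t > 0" and r: "r \<ge> 0"
  shows "\<bar>u * v * r\<bar> \<le> (t * (u * u * r) + v * v * r / t) / 2"
proof -
  have "0 \<le> (t * \<bar>u\<bar> - \<bar>v\<bar>)\<^sup>2" by simp
  then have "2 * t * (\<bar>u\<bar> * \<bar>v\<bar>) \<le> t * t * (u * u) + v * v"
    by (simp add: power2_eq_square algebra_simps abs_mult_self_eq)
  then have "2 * (\<bar>u\<bar> * \<bar>v\<bar>) \<le> t * (u * u) + v * v / t"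
    using t by (simp add: field_simps)
  then have "2 * (\<bar>u\<bar> * \<bar>v\<bar>) * r \<le> (t * (u * u) + v * v / t) * r"
    using r by (rule mult_right_mono)
  then show ?thesis using r by (simp add: abs_mult field_simps)
qed

lemma in_H_integrable_product:
  assumes f: "in_H d f" and g: "in_H d g"
  shows "integrable lborel (\<lambda>y. indicator {0<..} y * (f y * g y * rho d y))"
proof (rule Bochner_Integration.integrable_bound)
  show "integrable lborel (\<lambda>y. indicator {0<..} y * (f y * f y * rho d y) +
      indicator {0<..} y * (g y * g y * rho d y))"
    using f g by (simp add: in_H_iff_integrable)
  define F where "F y = indicator {0<..} y * f y" for y
  define G where "G y = indicator {0<..} y * g y" for y
  have [measurable]: "F \<in> borel_measurable lborel" "G \<in> borel_measurable lborel"
    using f g unfolding in_H_iff_integrable set_borel_measurable_def F_def G_def by simp_all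
  have "(\<lambda>y. indicator {0<..} y * (f y * g y * rho d y)) = (\<lambda>y. F y * G y * rho d y)"
    by (auto simp: fun_eq_iff indicator_def F_def G_def)
  also have "\<dots> \<in> borel_measurable lborel" unfolding rho_def by measurable
  finally show "(\<lambda>y. indicator {0<..} y * (f y * g y * rho d y)) \<in> borel_measurable lborel" .
  have "\<bar>u * v * r\<bar> \<le> u * u * r + v * v * r" if "r \<ge> 0" for u v r :: real
    using abs_mult_le_weighted_squares[of 1 r u v] that
      mult_nonneg_nonneg[of "u * u" r] mult_nonneg_nonneg[of "v * v" r] by simp
  then show "AE y in lborel. norm (indicator {0<..} y * (f y * g y * rho d y)) \<le>
      norm (indicator {0<..} y * (f y * f y * rho d y) + indicator {0<..} y * (g y * g y * rho d y))"
    by (intro AE_I2) (auto simp: indicator_def rho_nonneg)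
qed

lemma hinner_add_left:
  assumes "in_H d f" "in_H d g" "in_H d h"
  shows "hinner d (\<lambda>y. f y + g y) h = hinner d f h + hinner d g h"
  using in_H_integrable_product[OF assms(1,3)] in_H_integrable_product[OF assms(2,3)]
  unfolding hinner_eq_integral by (simp add: algebra_simps)

lemma abs_hinner_le:
  assumes f: "in_H d f" and g: "in_H d g"
    and "hinner d f f \<le> a\<^sup>2" and "hinner d g g \<le> b\<^sup>2" and a: "a > 0" and b: "b > 0"
  shows "\<bar>hinner d f g\<bar> \<le> a * b"
proof -
  define bound where "bound y = (b / a * (indicator {0<..} y * (f y * f y * rho d y)) +
      indicator {0<..} y * (g y * g y * rho d y) / (b / a)) / 2" for y
  have "integrable lborel bound"
    using f g unfolding bound_def in_H_iff_integrable by simp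
  moreover have "\<bar>indicator {0<..} y * (f y * g y * rho d y)\<bar> \<le> bound y" for y
    using abs_mult_le_weighted_squares[of "b / a" "rho d y" "f y" "g y"] a b
    by (cases "y > 0") (simp_all add: bound_def indicator_def rho_nonneg)
  ultimately have "\<bar>hinner d f g\<bar> \<le> integral\<^sup>L lborel bound"
    unfolding hinner_eq_integral
    by (intro integral_abs_bound_integral in_H_integrable_product f g)
  also have "integral\<^sup>L lborel bound = (b / a * hinner d f f + hinner d g g / (b / a)) / 2"
    using f g unfolding bound_def hinner_eq_integral in_H_iff_integrable by simp
  also have "\<dots> \<le> (b / a * a\<^sup>2 + b\<^sup>2 / (b / a)) / 2"
    using assms a b by (intro divide_right_mono add_mono mult_left_mono) auto
  also have "\<dots> = a * b" using a b by (simp add: power2_eq_square field_simps)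
  finally show ?thesis .
qed

lemma in_H_add:
  assumes f: "in_H d f" and g: "in_H d g"
  shows "in_H d (\<lambda>y. f y + g y)"
proof -
  have "set_borel_measurable lborel {0<..} (\<lambda>y. f y + g y)"
    using f g unfolding in_H_iff_integrable set_borel_measurable_def
    by (simp add: distrib_left borel_measurable_add)
  moreover have "(\<lambda>y. indicator {0<..} y * ((f y + g y) * (f y + g y) * rho d y)) =
      (\<lambda>y. indicator {0<..} y * (f y * f y * rho d y) + indicator {0<..} y * (g y * g y * rho d y) +
        2 * (indicator {0<..} y * (f y * g y * rho d y)))"
    by (simp add: fun_eq_iff algebra_simps)
  moreover have "integrable lborel (\<lambda>y. indicator {0<..} y * (f y * f y * rho d y) +
      indicator {0<..} y * (g y * g y * rho d y) + 2 * (indicator {0<..} y * (f y * g y * rho d y)))"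
    using f g in_H_integrable_product[OF f g] unfolding in_H_iff_integrable
    by auto
  ultimately show ?thesis unfolding in_H_iff_integrable by simp
qed

lemma phi_measurable [measurable]: "phi d n \<in> borel_measurable borel"
  unfolding phi_def phi_raw_def genlaguerre_def by measurable

lemma has_bochner_integral_phi_product:
  assumes d: "d \<ge> 7"
  shows "has_bochner_integral lborel (\<lambda>y. indicator {0<..} y * (phi d n y * phi d m y * rho d y))
           (normconst d n * normconst d m * phi_raw_gram d n m)"
proof -
  have "(\<lambda>y. indicator {0<..} y * (phi d n y * phi d m y * rho d y)) =
      (\<lambda>y. normconst d n * normconst d m * (indicator {0<..} y * (phi_raw d n y * phi_raw d m y * rho d y)))"
    unfolding phi_def by (simp add: fun_eq_iff algebra_simps)
  then show ?thesis
    using has_bochner_integral_phi_raw_product[OF d] by (simp add: has_bochner_integral_mult_right)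
qed

lemma in_H_phi: "d \<ge> 7 \<Longrightarrow> in_H d (phi d n)"
  using has_bochner_integral_phi_product[of d n n]
  unfolding in_H_iff_integrable set_borel_measurable_def has_bochner_integral_iff by simp

lemma hinner_phi:
  "d \<ge> 7 \<Longrightarrow> hinner d (phi d n) (phi d m) = normconst d n * normconst d m * phi_raw_gram d n m"
  unfolding hinner_eq_integral by (rule has_bochner_integral_integral_eq[OF has_bochner_integral_phi_product])

lemma hinner_phi_orthogonal: "d \<ge> 7 \<Longrightarrow> n \<noteq> m \<Longrightarrow> hinner d (phi d n) (phi d m) = 0"
  by (simp add: hinner_phi phi_raw_gram_eq_0)

lemma hinner_phi_self_le_1:
  assumes d: "d \<ge> 7"
  shows "hinner d (phi d n) (phi d n) \<le> 1"
proof -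
  have gram: "hinner d (phi_raw d n) (phi_raw d n) = phi_raw_gram d n n"
    unfolding hinner_eq_integral
    by (rule has_bochner_integral_integral_eq[OF has_bochner_integral_phi_raw_product[OF d]])
  have "0 \<le> hinner d (phi_raw d n) (phi_raw d n)"
    unfolding hinner_eq_integral
    by (intro integral_nonneg_AE AE_I2) (auto simp: indicator_def rho_nonneg)
  moreover have "normconst d n = 1 / sqrt (phi_raw_gram d n n)"
    unfolding normconst_def hnorm_def gram ..
  ultimately show ?thesis
    using hinner_phi[OF d, of n n] gram
    by (cases "phi_raw_gram d n n = 0") (simp_all add: power2_eq_square[symmetric] power_divide)
qed

definition phi_coeff_bound :: "nat \<Rightarrow> nat \<Rightarrow> real" where
  "phi_coeff_bound d n = \<bar>normconst d n\<bar> * (\<Sum>k\<le>n. \<bar>laguerre_coeff n (omega d / 2) k\<bar>)"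

definition phi_sum_bound :: "nat \<Rightarrow> nat \<Rightarrow> real" where
  "phi_sum_bound d l = (\<Sum>n\<le>l. phi_coeff_bound d n)"

lemma phi_coeff_bound_nonneg: "phi_coeff_bound d n \<ge> 0"
  unfolding phi_coeff_bound_def by (simp add: sum_nonneg)

lemma phi_sum_bound_nonneg: "phi_sum_bound d l \<ge> 0"
  unfolding phi_sum_bound_def by (simp add: sum_nonneg phi_coeff_bound_nonneg)

lemma abs_genlaguerre_le:
  assumes x: "x \<ge> 0"
  shows "\<bar>genlaguerre n a x\<bar> \<le> (\<Sum>k\<le>n. \<bar>laguerre_coeff n a k\<bar>) * (1 + x) ^ n"
proof -
  have "\<bar>genlaguerre n a x\<bar> \<le> (\<Sum>k\<le>n. \<bar>laguerre_coeff n a k * x ^ k\<bar>)"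
    unfolding genlaguerre_eq_sum_coeff by (rule sum_abs)
  also have "\<dots> \<le> (\<Sum>k\<le>n. \<bar>laguerre_coeff n a k\<bar> * (1 + x) ^ n)"
  proof (rule sum_mono)
    fix k assume "k \<in> {..n}"
    then have "x ^ k \<le> (1 + x) ^ n"
      using x by (intro order_trans[OF power_mono power_increasing]) auto
    then show "\<bar>laguerre_coeff n a k * x ^ k\<bar> \<le> \<bar>laguerre_coeff n a k\<bar> * (1 + x) ^ n"
      using x by (simp add: abs_mult mult_left_mono)
  qed
  finally show ?thesis by (simp add: sum_distrib_right)
qed

lemma abs_phi_le:
  assumes y: "y > 0"
  shows "\<bar>phi d n y\<bar> \<le> phi_coeff_bound d n * y powr (- gamma d) * (1 + y\<^sup>2) ^ n"
proof -
  have "\<bar>genlaguerre n (omega d / 2) (y\<^sup>2 / 4)\<bar> \<le>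
      (\<Sum>k\<le>n. \<bar>laguerre_coeff n (omega d / 2) k\<bar>) * (1 + y\<^sup>2 / 4) ^ n"
    by (rule abs_genlaguerre_le) simp
  also have "\<dots> \<le> (\<Sum>k\<le>n. \<bar>laguerre_coeff n (omega d / 2) k\<bar>) * (1 + y\<^sup>2) ^ n"
    by (intro mult_left_mono power_mono) (auto intro: sum_nonneg)
  finally show ?thesis
    using y unfolding phi_def phi_raw_def phi_coeff_bound_def
    by (simp add: abs_mult mult_left_mono mult_ac)
qed

lemma sum_abs_phi_le_near_0:
  assumes y: "0 < y" "y \<le> 1"
  shows "(\<Sum>n\<le>l. \<bar>phi d n y\<bar>) \<le> 2 ^ l * phi_sum_bound d l * y powr (- gamma d)"
proof -
  have "\<bar>phi d n y\<bar> \<le> phi_coeff_bound d n * y powr (- gamma d) * 2 ^ l" if "n \<le> l" for n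
  proof -
    have "(1 + y\<^sup>2) ^ n \<le> (2::real) ^ l"
      using y that by (intro order_trans[OF power_mono power_increasing]) (auto simp: power_le_one)
    then have "phi_coeff_bound d n * (y powr (- gamma d) * (1 + y\<^sup>2) ^ n) \<le>
        phi_coeff_bound d n * (y powr (- gamma d) * 2 ^ l)"
      by (intro mult_left_mono phi_coeff_bound_nonneg) simp_all
    then show ?thesis using abs_phi_le[OF y(1), of d n] by (simp add: mult.assoc)
  qed
  then have "(\<Sum>n\<le>l. \<bar>phi d n y\<bar>) \<le> (\<Sum>n\<le>l. phi_coeff_bound d n * y powr (- gamma d) * 2 ^ l)"
    by (intro sum_mono) simp
  also have "\<dots> = 2 ^ l * phi_sum_bound d l * y powr (- gamma d)"
    by (simp add: phi_sum_bound_def sum_distrib_left sum_distrib_right mult_ac)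
  finally show ?thesis .
qed

lemma sum_abs_phi_le_at_top:
  assumes d: "d \<ge> 7" and y: "1 \<le> y"
  shows "(\<Sum>n\<le>l. \<bar>phi d n y\<bar>) \<le> 2 ^ l * phi_sum_bound d l * y ^ (2 * l)"
proof -
  have "\<bar>phi d n y\<bar> \<le> phi_coeff_bound d n * (2 * y\<^sup>2) ^ l" if "n \<le> l" for n
  proof -
    have "y powr (- gamma d) \<le> 1" using powr_mono[of "- gamma d" 0 y] y gamma_gt_1[OF d] by simp
    moreover have "1 \<le> y\<^sup>2" using y by (simp add: one_le_power)
    then have "(1 + y\<^sup>2) ^ n \<le> (2 * y\<^sup>2) ^ l"
      using that by (intro order_trans[OF power_mono power_increasing]) (auto simp: one_le_power)
    ultimately have "y powr (- gamma d) * (1 + y\<^sup>2) ^ n \<le> (2 * y\<^sup>2) ^ l"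
      using mult_mono[of "y powr (- gamma d)" 1 "(1 + y\<^sup>2) ^ n" "(2 * y\<^sup>2) ^ l"] by simp
    then show ?thesis
      using abs_phi_le[of y d n] y mult_left_mono[OF _ phi_coeff_bound_nonneg]
      by (simp add: mult.assoc) (meson order_trans)
  qed
  then have "(\<Sum>n\<le>l. \<bar>phi d n y\<bar>) \<le> (\<Sum>n\<le>l. phi_coeff_bound d n * (2 * y\<^sup>2) ^ l)"
    by (intro sum_mono) simp
  also have "\<dots> = 2 ^ l * phi_sum_bound d l * y ^ (2 * l)"
    unfolding power_mult power_mult_distrib phi_sum_bound_def
    by (simp add: sum_distrib_left sum_distrib_right mult_ac)
  finally show ?thesis .
qed

lemma solves_U_continuous_on:
  assumes U: "solves_U d \<alpha> U"
  shows "continuous_on {0..} U"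
proof -
  have "continuous (at r within {0..}) U" if r: "r \<in> {0..}" for r
  proof (cases "r = 0")
    case True
    have "(U has_real_derivative \<alpha>) (at 0 within {0..})" using U by (simp add: solves_U_def)
    then have "continuous (at 0 within {0..}) U" by (rule DERIV_continuous)
    then show ?thesis using True by simp
  next
    case False
    with r have "r > 0" by auto
    then have "(U has_real_derivative deriv U r) (at r)" using U by (simp add: solves_U_def)
    then have "isCont U r" by (rule DERIV_isCont)
    then show ?thesis by (rule continuous_at_imp_continuous_at_within)
  qed
  then show ?thesis by (simp add: continuous_on_eq_continuous_within)
qed

lemma abs_le_powr_of_bigo:
  fixes f :: "real \<Rightarrow> real"
  assumes cont: "continuous_on {0..} f" and big: "f \<in> O[at_top](\<lambda>r. r powr (- g))" and g: "g \<ge> 0"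
  shows "\<exists>C>0. \<forall>r>0. \<bar>f r\<bar> \<le> C * r powr (- g)"
proof -
  obtain M where M: "M > 0" and "eventually (\<lambda>r. norm (f r) \<le> M * norm (r powr (- g))) at_top"
    using big by (elim landau_o.bigE)
  then obtain r0 where r0: "\<And>r. r \<ge> r0 \<Longrightarrow> \<bar>f r\<bar> \<le> M * \<bar>r powr (- g)\<bar>"
    by (auto simp: eventually_at_top_linorder)
  define r1 where "r1 = max r0 1"
  have "r1 \<ge> 1" by (simp add: r1_def)
  have "compact (f ` {0..r1})"
    by (rule compact_continuous_image[OF continuous_on_subset[OF cont]]) auto
  then obtain B where B: "\<And>r. r \<in> {0..r1} \<Longrightarrow> \<bar>f r\<bar> \<le> B"
    by (metis compact_imp_bounded bounded_iff imageI real_norm_def)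
  have "B \<ge> 0" using B[of 0] by (simp add: r1_def) linarith
  define C where "C = M + B * r1 powr g"
  show ?thesis
  proof (intro exI conjI allI impI)
    show "C > 0" unfolding C_def using M \<open>B \<ge> 0\<close> by (simp add: add_pos_nonneg)
    fix r :: real assume "r > 0"
    show "\<bar>f r\<bar> \<le> C * r powr (- g)"
    proof (cases "r \<ge> r1")
      case True
      then have "\<bar>f r\<bar> \<le> M * r powr (- g)" using r0[of r] by (simp add: r1_def)
      also have "\<dots> \<le> C * r powr (- g)"
        unfolding C_def using \<open>B \<ge> 0\<close> by (intro mult_right_mono) auto
      finally show ?thesis .
    next
      case False
      have "\<bar>f r\<bar> \<le> B" using B[of r] \<open>r > 0\<close> False by simp
      also have "\<dots> = B * r1 powr g * r1 powr (- g)" using \<open>r1 \<ge> 1\<close> by (simp add: powr_minus)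
      also have "\<dots> \<le> B * r1 powr g * r powr (- g)"
        using False \<open>r > 0\<close> g \<open>B \<ge> 0\<close> by (intro mult_left_mono powr_mono2') auto
      also have "\<dots> \<le> C * r powr (- g)" unfolding C_def using M by (intro mult_right_mono) auto
      finally show ?thesis .
    qed
  qed
qed

lemma solves_U_abs_diff_le_powr:
  assumes "solves_U d \<alpha> U" and g: "g \<ge> 0"
    and "\<exists>c>0. (\<lambda>r. U r - (pi/2 - c * r powr (- g))) \<in> O[at_top](\<lambda>r. r powr (- g - 2))"
  shows "\<exists>CU>0. \<forall>r>0. \<bar>U r - pi/2\<bar> \<le> CU * r powr (- g)"
proof (rule abs_le_powr_of_bigo)
  show "continuous_on {0..} (\<lambda>r. U r - pi/2)"
    using solves_U_continuous_on[OF assms(1)] by (intro continuous_intros)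
  obtain c where "(\<lambda>r. U r - (pi/2 - c * r powr (- g))) \<in> O[at_top](\<lambda>r. r powr (- g - 2))"
    using assms(3) by blast
  moreover have "(\<lambda>r::real. r powr (- g - 2)) \<in> O[at_top](\<lambda>r. r powr (- g))"
    by real_asymp
  ultimately have "(\<lambda>r. U r - (pi/2 - c * r powr (- g))) \<in> O[at_top](\<lambda>r. r powr (- g))"
    by (rule landau_o.big_trans)
  moreover have "(\<lambda>r. c * r powr (- g)) \<in> O[at_top](\<lambda>r. r powr (- g))" by simp
  ultimately have "(\<lambda>r. (U r - (pi/2 - c * r powr (- g))) - c * r powr (- g)) \<in> O[at_top](\<lambda>r. r powr (- g))"
    by (rule sum_in_bigo(2))
  then show "(\<lambda>r. U r - pi/2) \<in> O[at_top](\<lambda>r. r powr (- g))" by simp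
  show "g \<ge> 0" by (rule g)
qed

lemma eventually_exp_tail_le:
  fixes a c \<sigma> :: real
  assumes "a > 0" "c > 0" "\<sigma> > 0"
  shows "eventually (\<lambda>s. exp (a * s) * exp (- (exp (\<sigma> * s))\<^sup>2 / 8) \<le> exp (- c * s)) at_top"
proof -
  have "a + c > 0" using assms by simp
  then have "eventually (\<lambda>s. (a + c) * s \<le> exp (2 * \<sigma> * s) / 8) at_top"
    using \<open>\<sigma> > 0\<close> by real_asymp
  then show ?thesis
  proof eventually_elim
    case (elim s)
    have square: "(exp (\<sigma> * s))\<^sup>2 = exp (2 * \<sigma> * s)"
      by (simp add: power2_eq_square exp_add[symmetric])
    have "exp (a * s) * exp (- (exp (\<sigma> * s))\<^sup>2 / 8) = exp (a * s + - (exp (2 * \<sigma> * s) / 8))"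
      unfolding square by (simp only: exp_add minus_divide_left)
    also have "\<dots> \<le> exp (- c * s)" using elim by (simp add: distrib_right)
    finally show ?case .
  qed
qed

lemma powr_gamma_sq_rho_le_1:
  assumes "d \<ge> 7" and y: "0 < y" "y \<le> 1"
  shows "(y powr (- gamma d))\<^sup>2 * rho d y \<le> 1"
proof -
  have "y powr (1 + omega d) \<le> 1" using y omega_ge_1[OF \<open>d \<ge> 7\<close>] by (intro powr_le1) auto
  moreover have "exp (- (y\<^sup>2) / 4) \<le> 1" by simp
  ultimately show ?thesis
    unfolding powr_gamma_sq_rho[OF \<open>d \<ge> 7\<close> y(1)] by (intro mult_le_one) auto
qed

lemma power_sq_rho_le_tail:
  assumes "d \<ge> 1" and "0 < R" "R \<le> y"
  shows "(y ^ (2 * k))\<^sup>2 * rho d y \<le> exp (- R\<^sup>2 / 8) * (y powr real (4 * k + d - 1) * exp (- (1/8) * y\<^sup>2))"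
proof -
  have "4 * k + d - 1 = 2 * k * 2 + (d - 1)" using \<open>d \<ge> 1\<close> by simp
  then have "(y ^ (2 * k))\<^sup>2 * y ^ (d - 1) = y ^ (4 * k + d - 1)"
    by (simp only: power_add power_mult)
  moreover have "exp (- (y\<^sup>2) / 4) = exp (- (y\<^sup>2) / 8) * exp (- (y\<^sup>2) / 8)"
    by (simp add: exp_add[symmetric])
  ultimately have "(y ^ (2 * k))\<^sup>2 * rho d y = y ^ (4 * k + d - 1) * exp (- (y\<^sup>2) / 8) * exp (- (y\<^sup>2) / 8)"
    unfolding rho_def by (simp add: mult.assoc)
  also have "\<dots> \<le> y ^ (4 * k + d - 1) * exp (- (y\<^sup>2) / 8) * exp (- R\<^sup>2 / 8)"
    using assms by (intro mult_left_mono) (auto intro!: power_mono)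
  also have "y ^ (4 * k + d - 1) = y powr real (4 * k + d - 1)"
    using assms by (intro powr_realpow[symmetric]) simp
  finally show ?thesis by (simp add: mult_ac)
qed

definition perturbed_phi :: "nat \<Rightarrow> nat \<Rightarrow> real \<Rightarrow> (nat \<Rightarrow> real) \<Rightarrow> (real \<Rightarrow> real) \<Rightarrow> real \<Rightarrow> real" where
  "perturbed_phi d l s0 q \<psi> = (\<lambda>y. exp (lam d l * s0) * ((\<Sum>n<l. q n * phi d n y) - \<psi> y))"

definition error_const :: "nat \<Rightarrow> nat \<Rightarrow> real \<Rightarrow> real" where
  "error_const d l CU = (2 ^ l * phi_sum_bound d l + CU)\<^sup>2 +
     (2 ^ l * (phi_sum_bound d l + pi/2))\<^sup>2 * gaussian_moment (1/8) (real (4 * l + d - 1))"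

lemma error_const_pos:
  assumes "CU > 0"
  shows "error_const d l CU > 0"
proof -
  have "gaussian_moment (1/8) (real (4 * l + d - 1)) \<ge> 0"
    unfolding gaussian_moment_def by (intro divide_nonneg_pos Gamma_real_nonneg) auto
  moreover have "2 ^ l * phi_sum_bound d l + CU > 0"
    using assms phi_sum_bound_nonneg[of d l] by (simp add: add_nonneg_pos)
  ultimately show ?thesis unfolding error_const_def by (simp add: add_pos_nonneg)
qed

text \<open>\<open>\<delta>\<close> and \<open>R\<close> stand for \<open>K exp(-\<omega>\<^sub>l s0)\<close> and \<open>exp(\<sigma>t s0)\<close>; \<open>tail_le\<close> is the only
  place where \<open>s0\<close> has to be large.\<close>
locale perturbed_eigenfunction =
  fixes d l :: nat and U :: "real \<Rightarrow> real" and CU s0 \<delta> R :: real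
    and q :: "nat \<Rightarrow> real" and \<psi> :: "real \<Rightarrow> real"
  assumes d: "d \<ge> 7" and lam_pos: "lam d l > 0" and s0: "s0 \<ge> 0"
    and \<delta>_pos: "0 < \<delta>" and \<delta>_less_1: "\<delta> < 1" and R_ge_1: "1 \<le> R"
    and CU_pos: "CU > 0" and U_bound: "\<And>r. r > 0 \<Longrightarrow> \<bar>U r - pi/2\<bar> \<le> CU * r powr (- gamma d)"
    and q_bound: "sqrt (\<Sum>n<l. (q n)\<^sup>2) \<le> exp (- lam d l * s0)"
    and \<psi>_measurable: "set_borel_measurable lborel {0<..} \<psi>"
    and \<psi>_near_0: "\<And>y. 0 < y \<Longrightarrow> y < \<delta> \<Longrightarrow> \<psi> y = U (y * exp (lam d l / gamma d * s0)) - pi/2"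
    and \<psi>_middle: "\<And>y. \<delta> \<le> y \<Longrightarrow> y < R \<Longrightarrow>
      \<psi> y = (\<Sum>n<l. q n * phi d n y) - exp (- lam d l * s0) * phi d l y"
    and \<psi>_at_top: "\<And>y. R \<le> y \<Longrightarrow> \<bar>\<psi> y\<bar> \<le> pi/2"
    and tail_le: "exp (2 * lam d l * s0) * exp (- R\<^sup>2 / 8) \<le> \<delta>"
begin

definition error :: "real \<Rightarrow> real" where
  "error y = perturbed_phi d l s0 q \<psi> y - phi d l y"

lemma abs_q_le: "n < l \<Longrightarrow> \<bar>q n\<bar> \<le> exp (- lam d l * s0)"
  using q_bound real_sqrt_le_mono[OF member_le_sum[of n "{..<l}" "\<lambda>n. (q n)\<^sup>2"]] by simp

lemma abs_error_le: "\<bar>error y\<bar> \<le> (\<Sum>n\<le>l. \<bar>phi d n y\<bar>) + exp (lam d l * s0) * \<bar>\<psi> y\<bar>"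
proof -
  have "\<bar>exp (lam d l * s0) * (\<Sum>n<l. q n * phi d n y)\<bar> \<le> exp (lam d l * s0) * (\<Sum>n<l. \<bar>q n\<bar> * \<bar>phi d n y\<bar>)"
    using sum_abs[of "\<lambda>n. q n * phi d n y" "{..<l}"] by (simp add: abs_mult)
  also have "\<dots> \<le> exp (lam d l * s0) * (\<Sum>n<l. exp (- lam d l * s0) * \<bar>phi d n y\<bar>)"
    by (intro mult_left_mono sum_mono mult_right_mono abs_q_le) auto
  also have "\<dots> = (\<Sum>n<l. \<bar>phi d n y\<bar>)"
    by (simp add: sum_distrib_left mult.assoc[symmetric] exp_minus_inverse)
  finally have "\<bar>exp (lam d l * s0) * (\<Sum>n<l. q n * phi d n y)\<bar> \<le> (\<Sum>n<l. \<bar>phi d n y\<bar>)" .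
  moreover have "\<bar>error y\<bar> \<le> \<bar>exp (lam d l * s0) * (\<Sum>n<l. q n * phi d n y)\<bar> +
      \<bar>exp (lam d l * s0) * \<psi> y\<bar> + \<bar>phi d l y\<bar>"
    unfolding error_def perturbed_phi_def right_diff_distrib by linarith
  moreover have "(\<Sum>n\<le>l. \<bar>phi d n y\<bar>) = (\<Sum>n<l. \<bar>phi d n y\<bar>) + \<bar>phi d l y\<bar>"
    by (simp add: lessThan_Suc_atMost[symmetric])
  ultimately show ?thesis by (simp add: abs_mult)
qed

lemma abs_error_near_0:
  assumes y: "0 < y" "y < \<delta>"
  shows "\<bar>error y\<bar> \<le> (2 ^ l * phi_sum_bound d l + CU) * y powr (- gamma d)"
proof -
  have "gamma d > 0" using gamma_gt_1[OF d] by simp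
  have "exp (lam d l / gamma d * s0) powr (- gamma d) = exp (- lam d l * s0)"
    using \<open>gamma d > 0\<close> by (simp add: powr_def)
  then have "(y * exp (lam d l / gamma d * s0)) powr (- gamma d) = y powr (- gamma d) * exp (- lam d l * s0)"
    using y by (simp add: powr_mult)
  then have "exp (lam d l * s0) * \<bar>\<psi> y\<bar> \<le> exp (lam d l * s0) * (CU * (y powr (- gamma d) * exp (- lam d l * s0)))"
    using U_bound[of "y * exp (lam d l / gamma d * s0)"] \<psi>_near_0[OF y] y by (intro mult_left_mono) auto
  also have "\<dots> = CU * y powr (- gamma d)" by (simp add: exp_minus)
  moreover have "(\<Sum>n\<le>l. \<bar>phi d n y\<bar>) \<le> 2 ^ l * phi_sum_bound d l * y powr (- gamma d)"
    using y \<delta>_less_1 by (intro sum_abs_phi_le_near_0) auto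
  ultimately show ?thesis
    using abs_error_le[of y] unfolding distrib_right by linarith
qed

lemma error_middle: "\<delta> \<le> y \<Longrightarrow> y < R \<Longrightarrow> error y = 0"
  unfolding error_def perturbed_phi_def using \<psi>_middle by (simp add: exp_minus field_simps)

lemma abs_error_at_top:
  assumes y: "R \<le> y"
  shows "\<bar>error y\<bar> \<le> exp (lam d l * s0) * (2 ^ l * (phi_sum_bound d l + pi/2)) * y ^ (2 * l)"
proof -
  have "1 \<le> y" using y R_ge_1 by simp
  have exp_ge_1: "1 \<le> exp (lam d l * s0)" using lam_pos s0 by simp
  have power_ge_1: "1 \<le> 2 ^ l * y ^ (2 * l)"
    using \<open>1 \<le> y\<close> one_le_power[of 2 l] one_le_power[of y "2 * l"]
      mult_mono[of 1 "2 ^ l" 1 "y ^ (2 * l)"] by simp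
  have "(\<Sum>n\<le>l. \<bar>phi d n y\<bar>) \<le> 1 * (2 ^ l * phi_sum_bound d l * y ^ (2 * l))"
    using sum_abs_phi_le_at_top[OF d \<open>1 \<le> y\<close>] by simp
  also have "\<dots> \<le> exp (lam d l * s0) * (2 ^ l * phi_sum_bound d l * y ^ (2 * l))"
    using phi_sum_bound_nonneg \<open>1 \<le> y\<close> by (intro mult_right_mono exp_ge_1) simp
  finally have sum_phi: "(\<Sum>n\<le>l. \<bar>phi d n y\<bar>) \<le> exp (lam d l * s0) * (2 ^ l * phi_sum_bound d l * y ^ (2 * l))" .
  have "\<bar>\<psi> y\<bar> \<le> pi/2 * 1" using \<psi>_at_top[OF y] by simp
  also have "\<dots> \<le> pi/2 * (2 ^ l * y ^ (2 * l))" by (intro mult_left_mono power_ge_1) simp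
  finally have "exp (lam d l * s0) * \<bar>\<psi> y\<bar> \<le> exp (lam d l * s0) * (pi/2 * (2 ^ l * y ^ (2 * l)))"
    by (intro mult_left_mono) simp_all
  moreover have "exp (lam d l * s0) * (2 ^ l * (phi_sum_bound d l + pi/2)) * y ^ (2 * l) =
      exp (lam d l * s0) * (2 ^ l * phi_sum_bound d l * y ^ (2 * l)) +
      exp (lam d l * s0) * (pi/2 * (2 ^ l * y ^ (2 * l)))"
    by (simp add: algebra_simps)
  ultimately show ?thesis using abs_error_le[of y] sum_phi by linarith
qed

lemma error_sq_rho_le:
  assumes y: "0 < y"
  shows "(error y)\<^sup>2 * rho d y \<le> (2 ^ l * phi_sum_bound d l + CU)\<^sup>2 * indicator {0<..<\<delta>} y +
    \<delta> * (2 ^ l * (phi_sum_bound d l + pi/2))\<^sup>2 * (y powr real (4 * l + d - 1) * exp (- (1/8) * y\<^sup>2))"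
    (is "_ \<le> ?A\<^sup>2 * _ + \<delta> * ?B\<^sup>2 * ?tail y")
proof -
  have sq_le: "x\<^sup>2 \<le> b\<^sup>2" if "\<bar>x\<bar> \<le> b" for x b :: real
    using that by (metis abs_ge_zero order_trans power2_abs power_mono)
  have rho: "rho d y \<ge> 0" using y by (simp add: rho_nonneg)
  have tail: "?tail y \<ge> 0" by simp
  have tail_term: "0 \<le> \<delta> * ?B\<^sup>2 * ?tail y" using \<delta>_pos tail by simp
  consider "y < \<delta>" | "\<delta> \<le> y" "y < R" | "R \<le> y" by linarith
  then show ?thesis
  proof cases
    case 1
    have "(error y)\<^sup>2 * rho d y \<le> ?A\<^sup>2 * ((y powr (- gamma d))\<^sup>2 * rho d y)"
      using mult_right_mono[OF sq_le[OF abs_error_near_0[OF y 1]] rho] by (simp add: power_mult_distrib mult_ac)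
    also have "\<dots> \<le> ?A\<^sup>2"
      using powr_gamma_sq_rho_le_1[OF d y] 1 \<delta>_less_1 mult_left_mono[of _ 1 "?A\<^sup>2"] by simp
    finally have "(error y)\<^sup>2 * rho d y \<le> ?A\<^sup>2" .
    moreover have "indicator {0<..<\<delta>} y = (1::real)" using 1 y by simp
    ultimately show ?thesis using tail_term by simp
  next
    case 2
    moreover have "indicator {0<..<\<delta>} y = (0::real)" using 2 by simp
    ultimately show ?thesis using tail_term by (simp add: error_middle)
  next
    case 3
    have "exp (2 * lam d l * s0) = (exp (lam d l * s0))\<^sup>2"
      by (simp add: exp_double[symmetric] mult.assoc)
    then have "(error y)\<^sup>2 * rho d y \<le> exp (2 * lam d l * s0) * ?B\<^sup>2 * ((y ^ (2 * l))\<^sup>2 * rho d y)"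
      using mult_right_mono[OF sq_le[OF abs_error_at_top[OF 3]] rho]
      by (simp only: power_mult_distrib mult_ac)
    also have "\<dots> \<le> exp (2 * lam d l * s0) * ?B\<^sup>2 * (exp (- R\<^sup>2 / 8) * ?tail y)"
      using power_sq_rho_le_tail[of d R y l] d R_ge_1 3 by (intro mult_left_mono) simp_all
    also have "\<dots> \<le> \<delta> * ?B\<^sup>2 * ?tail y"
      using mult_right_mono[OF tail_le, of "?B\<^sup>2 * ?tail y"] tail by (simp add: mult_ac)
    finally have "(error y)\<^sup>2 * rho d y \<le> \<delta> * ?B\<^sup>2 * ?tail y" .
    moreover have "indicator {0<..<\<delta>} y = (0::real)" using 3 R_ge_1 \<delta>_less_1 by simp
    ultimately show ?thesis by simp
  qed
qed

lemma in_H_error: "in_H d error" and hinner_error_le: "hinner d error error \<le> error_const d l CU * \<delta>"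
proof -
  define A where "A = 2 ^ l * phi_sum_bound d l + CU"
  define B where "B = 2 ^ l * (phi_sum_bound d l + pi/2)"
  define p where "p = real (4 * l + d - 1)"
  define bound where "bound y = A\<^sup>2 * indicator {0<..<\<delta>} y +
    \<delta> * B\<^sup>2 * (indicator {0<..} y * (y powr p * exp (- (1/8) * y\<^sup>2)))" for y
  have "has_bochner_integral lborel (indicator {0<..<\<delta>}) \<delta>"
    using has_bochner_integral_real_indicator[of "{0<..<\<delta>}" lborel] \<delta>_pos by simp
  moreover have "has_bochner_integral lborel (\<lambda>y. indicator {0<..} y * (y powr p * exp (- (1/8) * y\<^sup>2)))
      (gaussian_moment (1/8) p)"
    by (rule has_bochner_integral_powr_exp_square) (simp_all add: p_def)
  ultimately have bound_integral: "has_bochner_integral lborel bound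
      (A\<^sup>2 * \<delta> + \<delta> * B\<^sup>2 * gaussian_moment (1/8) p)"
    unfolding bound_def by (intro has_bochner_integral_add has_bochner_integral_mult_right)
  have [measurable]: "(\<lambda>y. indicator {0<..} y * \<psi> y) \<in> borel_measurable lborel"
    using \<psi>_measurable unfolding set_borel_measurable_def by simp
  have "(\<lambda>y. indicator {0<..} y * error y) = (\<lambda>y. exp (lam d l * s0) *
      (indicator {0<..} y * (\<Sum>n<l. q n * phi d n y) - indicator {0<..} y * \<psi> y) - indicator {0<..} y * phi d l y)"
    by (auto simp: fun_eq_iff error_def perturbed_phi_def algebra_simps)
  also have "\<dots> \<in> borel_measurable lborel" by measurable
  finally have measurable: "set_borel_measurable lborel {0<..} error"
    unfolding set_borel_measurable_def by simp
  have dominated: "\<bar>indicator {0<..} y * (error y * error y * rho d y)\<bar> \<le> bound y" for y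
  proof (cases "y > 0")
    case True
    then have "0 \<le> error y * error y * rho d y" by (simp add: rho_nonneg)
    then show ?thesis
      using error_sq_rho_le[OF True] True unfolding bound_def A_def B_def p_def
      by (simp add: power2_eq_square)
  qed (simp add: bound_def)
  define E where "E y = indicator {0<..} y * error y" for y
  have [measurable]: "E \<in> borel_measurable lborel"
    using measurable unfolding set_borel_measurable_def E_def by simp
  have "(\<lambda>y. indicator {0<..} y * (error y * error y * rho d y)) = (\<lambda>y. E y * E y * rho d y)"
    by (auto simp: fun_eq_iff E_def indicator_def)
  also have "\<dots> \<in> borel_measurable lborel" unfolding rho_def by measurable
  finally have integrable: "integrable lborel (\<lambda>y. indicator {0<..} y * (error y * error y * rho d y))"
    using dominated
    by (intro Bochner_Integration.integrable_bound[OF integrable.intros[OF bound_integral]] AE_I2)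
      (simp_all, metis abs_ge_self order_trans)
  then show "in_H d error" using measurable by (simp add: in_H_iff_integrable)
  have "hinner d error error \<le> integral\<^sup>L lborel bound"
    unfolding hinner_eq_integral using dominated
    by (intro integral_mono integrable integrable.intros[OF bound_integral]) (metis abs_le_D1)
  also have "\<dots> = error_const d l CU * \<delta>"
    using bound_integral unfolding error_const_def A_def B_def p_def
    by (simp add: has_bochner_integral_iff algebra_simps)
  finally show "hinner d error error \<le> error_const d l CU * \<delta>" .
qed

lemma perturbed_phi_estimates:
  "in_H d (perturbed_phi d l s0 q \<psi>) \<and>
   hnorm d (\<lambda>y. perturbed_phi d l s0 q \<psi> y - phi d l y) \<le> sqrt (error_const d l CU * \<delta>) \<and>
   (\<forall>n. n \<noteq> l \<longrightarrow> \<bar>hinner d (perturbed_phi d l s0 q \<psi>) (phi d n)\<bar> \<le> sqrt (error_const d l CU * \<delta>))"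
proof (intro conjI allI impI)
  have split: "perturbed_phi d l s0 q \<psi> = (\<lambda>y. error y + phi d l y)"
    by (simp add: fun_eq_iff error_def)
  have "error_const d l CU * \<delta> > 0" using error_const_pos[OF CU_pos] \<delta>_pos by simp
  then have E: "sqrt (error_const d l CU * \<delta>) > 0" "hinner d error error \<le> (sqrt (error_const d l CU * \<delta>))\<^sup>2"
    using hinner_error_le by simp_all
  show "in_H d (perturbed_phi d l s0 q \<psi>)"
    unfolding split by (intro in_H_add in_H_error in_H_phi d)
  show "hnorm d (\<lambda>y. perturbed_phi d l s0 q \<psi> y - phi d l y) \<le> sqrt (error_const d l CU * \<delta>)"
    using hinner_error_le unfolding hnorm_def error_def[symmetric] by (simp add: real_sqrt_le_mono)
  fix n assume "n \<noteq> l"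
  have "hinner d (perturbed_phi d l s0 q \<psi>) (phi d n) = hinner d error (phi d n)"
    unfolding split using hinner_phi_orthogonal[OF d \<open>n \<noteq> l\<close>[symmetric]]
    by (simp add: hinner_add_left in_H_error in_H_phi d)
  also have "\<bar>\<dots>\<bar> \<le> sqrt (error_const d l CU * \<delta>) * 1"
    using E hinner_phi_self_le_1[OF d, of n]
    by (intro abs_hinner_le in_H_error in_H_phi d) simp_all
  finally show "\<bar>hinner d (perturbed_phi d l s0 q \<psi>) (phi d n)\<bar> \<le> sqrt (error_const d l CU * \<delta>)" by simp
qed

end

theorem lemma5p1:
  fixes d l :: nat and \<alpha> kt \<sigma>t :: real and U :: "real \<Rightarrow> real"
  assumes "d \<ge> 7" and "l \<ge> 1" and "lam d l > 0" and "\<alpha> > 0"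
    and "0 < kt" and "kt < 1" and "0 < \<sigma>t" and "\<sigma>t < 1/2"
    and U_sol: "solves_U d \<alpha> U"
    and U_mono: "strict_mono_on {0<..} U"
    and U_asymp: "\<exists>c>0. (\<lambda>r. U r - (pi/2 - c * r powr (- gamma d)))
                          \<in> O[at_top](\<lambda>r. r powr (- gamma d - 2))"
  shows "\<exists>\<kappa>>0. \<exists>C>0. \<exists>sstar>0. \<forall>s0\<ge>sstar. \<forall>q :: nat \<Rightarrow> real. \<forall>\<psi> :: real \<Rightarrow> real.
    let \<omega>l = lam d l / gamma d;
        K = exp (kt * \<omega>l * s0);
        \<phi>t = (\<lambda>y. exp (lam d l * s0) * ((\<Sum>n<l. q n * phi d n y) - \<psi> y))
    in (sqrt (\<Sum>n<l. (q n)\<^sup>2) \<le> exp (- lam d l * s0) \<and>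
        set_borel_measurable lborel {0<..} \<psi> \<and>
        (\<forall>y. 0 < y \<and> y < K * exp (- \<omega>l * s0) \<longrightarrow>
              \<psi> y = U (y * exp (\<omega>l * s0)) - pi/2) \<and>
        (\<forall>y. K * exp (- \<omega>l * s0) \<le> y \<and> y < exp (\<sigma>t * s0) \<longrightarrow>
              \<psi> y = (\<Sum>n<l. q n * phi d n y) - exp (- lam d l * s0) * phi d l y) \<and>
        (\<forall>y. exp (\<sigma>t * s0) \<le> y \<longrightarrow> \<bar>\<psi> y\<bar> \<le> pi/2))
       \<longrightarrow> in_H d \<phi>t \<and>
           hnorm d (\<lambda>y. \<phi>t y - phi d l y) \<le> C * exp (- \<kappa> * s0) \<and>
           (\<forall>n. n \<noteq> l \<longrightarrow> \<bar>hinner d \<phi>t (phi d n)\<bar> \<le> C * exp (- \<kappa> * s0))"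
proof -
  have \<gamma>: "gamma d > 1" using gamma_gt_1 \<open>d \<ge> 7\<close> by simp
  obtain CU where CU: "CU > 0" "\<forall>r>0. \<bar>U r - pi/2\<bar> \<le> CU * r powr (- gamma d)"
    using solves_U_abs_diff_le_powr[OF U_sol _ U_asymp] \<gamma> by auto
  define \<kappa> where "\<kappa> = (1 - kt) * (lam d l / gamma d) / 2"
  have "\<kappa> > 0" unfolding \<kappa>_def using assms \<gamma> by (simp add: divide_pos_pos)
  have \<delta>: "exp (kt * (lam d l / gamma d) * s) * exp (- (lam d l / gamma d) * s) = exp (- (2 * \<kappa>) * s)" for s
    unfolding \<kappa>_def using \<gamma> by (simp add: exp_add[symmetric] field_simps)
  obtain s1 where s1: "\<And>s. s \<ge> s1 \<Longrightarrow>
      exp (2 * lam d l * s) * exp (- (exp (\<sigma>t * s))\<^sup>2 / 8) \<le> exp (- (2 * \<kappa>) * s)"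
    using eventually_exp_tail_le[of "2 * lam d l" "2 * \<kappa>" \<sigma>t] assms \<open>\<kappa> > 0\<close>
    by (auto simp: eventually_at_top_linorder)
  show ?thesis unfolding Let_def
  proof (rule exI[of _ \<kappa>], rule conjI[OF \<open>\<kappa> > 0\<close>],
      rule exI[of _ "sqrt (error_const d l CU)"], rule conjI[OF real_sqrt_gt_zero[OF error_const_pos[OF CU(1)]]],
      rule exI[of _ "max s1 1"], rule conjI[OF max.strict_coboundedI2[OF zero_less_one]],
      intro allI impI, goal_cases)
    case (1 s0 q \<psi>)
    interpret perturbed_eigenfunction d l U CU s0
      "exp (kt * (lam d l / gamma d) * s0) * exp (- (lam d l / gamma d) * s0)" "exp (\<sigma>t * s0)" q \<psi>
      using assms CU 1 s1[of s0] \<open>\<kappa> > 0\<close> unfolding \<delta> by unfold_locales auto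
    have "exp (- (2 * \<kappa>) * s0) = (exp (- \<kappa> * s0))\<^sup>2"
      by (simp add: power2_eq_square exp_add[symmetric] algebra_simps)
    then have "sqrt (error_const d l CU * exp (- (2 * \<kappa>) * s0)) = sqrt (error_const d l CU) * exp (- \<kappa> * s0)"
      by (simp add: real_sqrt_mult)
    then show ?case using perturbed_phi_estimates unfolding \<delta> perturbed_phi_def by simp
  qed
qed

end
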